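(* Let $\Delta$ be a simplicial complex on vertex set $[n]$. Then there is a collection $\mathcal{X}=(X_1,\dots,X_n)$ of discrete subsets of $\mathbb{R}$, each containing $0$, such that $\Delta=\Delta(\mathcal{X};\mu)$ for some $\mu\in\mathbb{R}$. Moreover, there is a collection $\mathcal{X}=(X_1,\dots,X_n)$ of contractible subsets of $\mathbb{R}^2$, each containing the origin, and a point $\mu\in\mathbb{R}^2$ with $\Delta=\Delta(\mathcal{X};\mu)$.
   Context: For arbitrary sets $X_1,\dots,X_n\subseteq\mathbb{R}^d$ containing the origin and $\sigma\subseteq[n]$, write $X_\sigma=\sum_{i\in\sigma}X_i=\{\sum_{i\in\sigma}x_i: x_i\in X_i\}$ (Minkowski sum), with $X_\emptyset=\{0\}$. For $\mu\in\mathbb{R}^d$, the Minkowski complex $\Delta(\mathcal{X};\mu)$ is the simplicial complex on vertex set $[n]$ whose faces are the $\sigma\subseteq[n]$ with $\mu\notin X_\sigma$. *)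

theory Defs
  imports "HOL-Analysis.Analysis"
begin

definition simplicial_complex :: "nat \<Rightarrow> nat set set \<Rightarrow> bool" where
  "simplicial_complex n \<Delta> \<longleftrightarrow> \<Delta> \<subseteq> Pow {1..n} \<and> (\<forall>\<sigma>\<in>\<Delta>. \<forall>\<tau>. \<tau> \<subseteq> \<sigma> \<longrightarrow> \<tau> \<in> \<Delta>)"

definition msum :: "(nat \<Rightarrow> 'a::comm_monoid_add set) \<Rightarrow> nat set \<Rightarrow> 'a set" where
  "msum X \<sigma> = {(\<Sum>i\<in>\<sigma>. x i) | x. \<forall>i\<in>\<sigma>. x i \<in> X i}"

definition minkowski_complex :: "nat \<Rightarrow> (nat \<Rightarrow> 'a::comm_monoid_add set) \<Rightarrow> 'a \<Rightarrow> nat set set" where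
  "minkowski_complex n X \<mu> = {\<sigma>. \<sigma> \<subseteq> {1..n} \<and> \<mu> \<notin> msum X \<sigma>}"

end

theory Submission
  imports Defs
begin

text \<open>Encode every non-face \<open>\<tau>\<close> in binary: each pair of a non-face and one of its vertices
  gets its own bit, and the least vertex of \<open>\<tau>\<close> additionally carries the correction that makes
  the entries of \<open>\<tau>\<close> add up to a common target \<open>\<mu> = 2 ^ (Q + 1)\<close>. The corrections exceed
  \<open>2 ^ Q\<close> while all bits together stay below it, so any representation of \<open>\<mu>\<close> uses exactly one
  correction, and then the bits must be those of one non-face, which is therefore contained in
  the index set. The planar sets are the cones over these finite sets with apex \<open>(0, 1)\<close>: they
  are star-shaped, and a sum of cone points lies on the first axis only if every summand does.\<close>

lemma bit_sum_two_power_iff: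
  assumes "finite A"
  shows "bit (\<Sum>k\<in>A. (2::nat) ^ k) n \<longleftrightarrow> n \<in> A"
  using assms
proof (induction A arbitrary: n)
  case (insert k A)
  have "\<not> bit ((2::nat) ^ k) m \<or> \<not> bit (\<Sum>k\<in>A. (2::nat) ^ k) m" for m
    using insert by (auto simp: bit_exp_iff)
  with insert show ?case
    by (simp add: bit_disjunctive_add_iff bit_exp_iff)
qed simp

lemma of_nat_sum_two_power: "real (\<Sum>k\<in>A. (2::nat) ^ k) = (\<Sum>k\<in>A. (2::real) ^ k)"
  by simp

lemma sum_two_power_inj:
  assumes "finite A" "finite B" "(\<Sum>k\<in>A. (2::real) ^ k) = (\<Sum>k\<in>B. 2 ^ k)"
  shows "A = B"
proof -
  have sums_eq: "(\<Sum>k\<in>A. (2::nat) ^ k) = (\<Sum>k\<in>B. 2 ^ k)"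
    using assms(3) unfolding of_nat_sum_two_power[symmetric] of_nat_eq_iff .
  show ?thesis
  proof (rule set_eqI)
    fix n
    show "n \<in> A \<longleftrightarrow> n \<in> B"
      using bit_sum_two_power_iff[OF assms(1), of n] bit_sum_two_power_iff[OF assms(2), of n]
      unfolding sums_eq by simp
  qed
qed

lemma sum_two_power_less:
  assumes "A \<subseteq> {..<q}"
  shows "(\<Sum>k\<in>A. (2::real) ^ k) < 2 ^ q"
proof -
  have "(\<Sum>k\<in>A. (2::nat) ^ k) \<le> (\<Sum>k\<in>{k. k < q}. 2 ^ k)"
    using assms by (intro sum_mono2) auto
  also have "\<dots> < 2 ^ q"
    unfolding mask_eq_sum_exp[symmetric] by simp
  finally have "real (\<Sum>k\<in>A. (2::nat) ^ k) < real (2 ^ q)"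
    by (simp only: of_nat_less_iff)
  then show ?thesis
    by (simp only: of_nat_sum_two_power of_nat_power of_nat_numeral)
qed

lemma zero_in_msum_empty: "0 \<in> msum X {}"
  unfolding msum_def by simp

lemma msum_mono:
  assumes "finite \<sigma>" "\<tau> \<subseteq> \<sigma>" "\<And>i. i \<in> \<sigma> \<Longrightarrow> 0 \<in> X i"
  shows "msum X \<tau> \<subseteq> msum X \<sigma>"
proof
  fix y assume "y \<in> msum X \<tau>"
  then obtain x where x: "\<forall>i\<in>\<tau>. x i \<in> X i" "y = (\<Sum>i\<in>\<tau>. x i)"
    unfolding msum_def by auto
  define x' where "x' i = (if i \<in> \<tau> then x i else 0)" for i
  have "y = (\<Sum>i\<in>\<sigma>. x' i)"
    using x(2) assms(2) sum.inter_restrict[OF assms(1), of x \<tau>] by (simp add: x'_def Int_absorb1)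
  moreover have "\<forall>i\<in>\<sigma>. x' i \<in> X i"
    using x(1) assms(3) by (simp add: x'_def)
  ultimately show "y \<in> msum X \<sigma>"
    unfolding msum_def by blast
qed

lemma msum_nonzero_summands:
  assumes "finite \<sigma>" "y \<in> msum X \<sigma>"
  obtains S x where "S \<subseteq> \<sigma>" "\<forall>i\<in>S. x i \<in> X i \<and> x i \<noteq> 0" "y = (\<Sum>i\<in>S. x i)"
proof -
  obtain x where x: "\<forall>i\<in>\<sigma>. x i \<in> X i" "y = (\<Sum>i\<in>\<sigma>. x i)"
    using assms(2) unfolding msum_def by auto
  let ?S = "{i\<in>\<sigma>. x i \<noteq> 0}"
  have "y = (\<Sum>i\<in>?S. x i)"
    using x(2) by (simp add: sum.mono_neutral_right[OF assms(1)])
  with x(1) show ?thesis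
    using that[of ?S x] by blast
qed

locale binary_encoding =
  fixes N :: "nat set set" and code :: "nat set \<times> nat \<Rightarrow> nat" and Q :: nat
  assumes finite_family: "finite N"
    and finite_members: "\<And>\<tau>. \<tau> \<in> N \<Longrightarrow> finite \<tau>"
    and nonempty_members: "\<And>\<tau>. \<tau> \<in> N \<Longrightarrow> \<tau> \<noteq> {}"
    and code_inj: "inj_on code (SIGMA \<tau>:N. \<tau>)"
    and code_less: "code ` (SIGMA \<tau>:N. \<tau>) \<subseteq> {..<Q}"
begin

definition weight :: "nat set \<Rightarrow> real" where
  "weight \<tau> = (\<Sum>j\<in>\<tau>. 2 ^ code (\<tau>, j))"

definition target :: real where
  "target = 2 ^ Suc Q"

definition entry :: "nat set \<Rightarrow> nat \<Rightarrow> real" where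
  "entry \<tau> i = 2 ^ code (\<tau>, i) + (if i = Min \<tau> then target - weight \<tau> else 0)"

definition summands :: "nat \<Rightarrow> real set" where
  "summands i = insert 0 {entry \<tau> i | \<tau>. \<tau> \<in> N \<and> i \<in> \<tau>}"

lemma weight_eq_sum_codes:
  assumes "\<tau> \<in> N"
  shows "weight \<tau> = (\<Sum>k\<in>(\<lambda>j. code (\<tau>, j)) ` \<tau>. 2 ^ k)"
proof -
  have "inj_on (\<lambda>j. code (\<tau>, j)) \<tau>"
    using code_inj assms by (auto simp: inj_on_def)
  then show ?thesis
    unfolding weight_def by (simp add: sum.reindex)
qed

lemma weight_less: "\<tau> \<in> N \<Longrightarrow> weight \<tau> < 2 ^ Q"
  using code_less by (auto simp: weight_eq_sum_codes intro!: sum_two_power_less)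

lemma sum_entry: "\<tau> \<in> N \<Longrightarrow> (\<Sum>i\<in>\<tau>. entry \<tau> i) = target"
  using finite_members nonempty_members Min_in
  by (simp add: entry_def weight_def sum.distrib)

lemma zero_in_summands: "0 \<in> summands i"
  unfolding summands_def by blast

lemma finite_summands: "finite (summands i)"
proof -
  have "summands i \<subseteq> insert 0 ((\<lambda>\<tau>. entry \<tau> i) ` N)"
    unfolding summands_def by auto
  then show ?thesis
    using finite_family finite_subset by blast
qed

lemma target_in_msum_summands:
  assumes "finite \<sigma>" "\<tau> \<in> N" "\<tau> \<subseteq> \<sigma>"
  shows "target \<in> msum summands \<sigma>"
proof -
  have "\<forall>i\<in>\<tau>. entry \<tau> i \<in> summands i"
    using assms(2) unfolding summands_def by blast
  then have "target \<in> msum summands \<tau>"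
    using sum_entry[OF assms(2)] unfolding msum_def by force
  then show ?thesis
    using msum_mono[OF assms(1,3), where X = summands] zero_in_summands by blast
qed

context
  fixes S :: "nat set" and t :: "nat \<Rightarrow> nat set"
  assumes finite_S: "finite S"
    and t_member: "\<And>i. i \<in> S \<Longrightarrow> t i \<in> N \<and> i \<in> t i"
    and sum_target: "(\<Sum>i\<in>S. entry (t i) i) = target"
begin

abbreviation "leaders \<equiv> {i \<in> S. i = Min (t i)}"

lemma chosen_sum_eq_sum_codes:
  "(\<Sum>i\<in>S. (2::real) ^ code (t i, i)) = (\<Sum>k\<in>(\<lambda>i. code (t i, i)) ` S. 2 ^ k)"
proof -
  have "inj_on (\<lambda>i. code (t i, i)) S"
  proof (rule inj_onI)
    fix a b assume "a \<in> S" "b \<in> S" "code (t a, a) = code (t b, b)"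
    then have "(t a, a) = (t b, b)"
      using inj_onD[OF code_inj] t_member by blast
    then show "a = b"
      by simp
  qed
  then show ?thesis
    by (simp add: sum.reindex)
qed

lemma chosen_codes_less: "(\<Sum>i\<in>S. (2::real) ^ code (t i, i)) < 2 ^ Q"
proof -
  have "(\<lambda>i. code (t i, i)) ` S \<subseteq> {..<Q}"
    using code_less t_member by auto
  then show ?thesis
    unfolding chosen_sum_eq_sum_codes by (rule sum_two_power_less)
qed

lemma target_split:
  "target = (\<Sum>i\<in>S. (2::real) ^ code (t i, i)) + (\<Sum>i\<in>leaders. target - weight (t i))"
  using sum_target finite_S
  by (simp add: entry_def sum.distrib sum.inter_filter)

lemma leaders_singleton: "\<exists>m. leaders = {m}"
proof -
  have big: "2 ^ Q < target - weight (t i)" if "i \<in> leaders" for i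
    using weight_less[of "t i"] t_member that by (simp add: target_def)
  have nonneg: "0 \<le> target - weight (t i)" if "i \<in> leaders" for i
    using big[OF that] zero_less_power[of "2::real" Q] by linarith
  have "leaders \<noteq> {}"
  proof
    assume "leaders = {}"
    then have "target < 2 ^ Q"
      using target_split chosen_codes_less by (simp only: sum.empty add_0_right)
    then show False
      by (simp add: target_def)
  qed
  moreover have "a = b" if "a \<in> leaders" "b \<in> leaders" for a b
  proof (rule ccontr)
    assume "a \<noteq> b"
    then have "(\<Sum>i\<in>{a, b}. target - weight (t i)) \<le> (\<Sum>i\<in>leaders. target - weight (t i))"
      using that finite_S nonneg by (intro sum_mono2) auto
    moreover have "(\<Sum>i\<in>{a, b}. target - weight (t i)) = (target - weight (t a)) + (target - weight (t b))"
      using \<open>a \<noteq> b\<close> by simp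
    moreover have "0 \<le> (\<Sum>i\<in>S. (2::real) ^ code (t i, i))"
      by (simp add: sum_nonneg)
    moreover have "target = 2 * 2 ^ Q"
      by (simp add: target_def)
    ultimately show False
      using big[OF that(1)] big[OF that(2)] target_split by linarith
  qed
  ultimately show ?thesis
    by blast
qed

lemma member_subset_if_sum_target: "\<exists>\<tau>\<in>N. \<tau> \<subseteq> S"
proof -
  obtain m where m: "leaders = {m}"
    using leaders_singleton by blast
  then have m_in: "m \<in> S" "t m \<in> N"
    using t_member by auto
  have "(\<Sum>i\<in>S. (2::real) ^ code (t i, i)) = weight (t m)"
    using target_split m by simp
  then have codes_eq: "(\<lambda>i. code (t i, i)) ` S = (\<lambda>j. code (t m, j)) ` t m"
    using finite_S finite_members[OF m_in(2)]
    by (intro sum_two_power_inj) (simp_all add: chosen_sum_eq_sum_codes weight_eq_sum_codes[OF m_in(2)])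
  have "t m \<subseteq> S"
  proof
    fix j assume j: "j \<in> t m"
    then obtain i where i: "i \<in> S" "code (t i, i) = code (t m, j)"
      using codes_eq by (metis (no_types, lifting) imageE imageI)
    then have "(t i, i) = (t m, j)"
      using inj_onD[OF code_inj] t_member m_in(2) j by blast
    with i(1) show "j \<in> S"
      by simp
  qed
  with m_in(2) show ?thesis
    by blast
qed

end

lemma target_in_msum_summands_iff:
  assumes "finite \<sigma>"
  shows "target \<in> msum summands \<sigma> \<longleftrightarrow> (\<exists>\<tau>\<in>N. \<tau> \<subseteq> \<sigma>)"
proof
  assume "target \<in> msum summands \<sigma>"
  then obtain S x where S: "S \<subseteq> \<sigma>" "\<forall>i\<in>S. x i \<in> summands i \<and> x i \<noteq> 0"
    and sum_x: "target = (\<Sum>i\<in>S. x i)"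
    using msum_nonzero_summands[OF assms] by metis
  have "\<forall>i\<in>S. \<exists>\<tau>. (\<tau> \<in> N \<and> i \<in> \<tau>) \<and> x i = entry \<tau> i"
    using S(2) unfolding summands_def by auto
  then obtain t where t: "\<And>i. i \<in> S \<Longrightarrow> t i \<in> N \<and> i \<in> t i" "\<And>i. i \<in> S \<Longrightarrow> x i = entry (t i) i"
    by metis
  have "(\<Sum>i\<in>S. entry (t i) i) = target"
    using sum_x t(2) by simp
  then have "\<exists>\<tau>\<in>N. \<tau> \<subseteq> S"
    using member_subset_if_sum_target finite_subset[OF S(1) assms] t(1) by blast
  with S(1) show "\<exists>\<tau>\<in>N. \<tau> \<subseteq> \<sigma>"
    by blast
qed (use assms target_in_msum_summands in blast)

end

lemma minkowski_sum_realizes_upward_family: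
  fixes N :: "nat set set"
  assumes "finite N" "\<And>\<tau>. \<tau> \<in> N \<Longrightarrow> finite \<tau>"
  shows "\<exists>(X :: nat \<Rightarrow> real set) \<mu>. (\<forall>i. finite (X i) \<and> 0 \<in> X i)
           \<and> (\<forall>\<sigma>. finite \<sigma> \<longrightarrow> (\<mu> \<in> msum X \<sigma> \<longleftrightarrow> (\<exists>\<tau>\<in>N. \<tau> \<subseteq> \<sigma>)))"
proof (cases "{} \<in> N")
  case True
  have "0 \<in> msum (\<lambda>_. {0::real}) \<sigma>" if "finite \<sigma>" for \<sigma>
    using msum_mono[OF that empty_subsetI, of "\<lambda>_. {0}"] zero_in_msum_empty by blast
  with True show ?thesis
    by (intro exI[where x = "\<lambda>_. {0}"] exI[where x = 0]) auto
next
  case False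
  obtain code :: "nat set \<times> nat \<Rightarrow> nat" and Q
    where "code ` (SIGMA \<tau>:N. \<tau>) = {i. i < Q}" "inj_on code (SIGMA \<tau>:N. \<tau>)"
    using finite_imp_inj_to_nat_seg[of "SIGMA \<tau>:N. \<tau>"] assms by blast
  then interpret binary_encoding N code Q
    using assms False by unfold_locales auto
  have "\<forall>i. finite (summands i) \<and> 0 \<in> summands i"
    using finite_summands zero_in_summands by blast
  moreover have "\<forall>\<sigma>. finite \<sigma> \<longrightarrow> (target \<in> msum summands \<sigma> \<longleftrightarrow> (\<exists>\<tau>\<in>N. \<tau> \<subseteq> \<sigma>))"
    using target_in_msum_summands_iff by blast
  ultimately show ?thesis
    by blast
qed

lemma simplicial_complex_eq_minkowski_complex_finite:
  assumes "simplicial_complex n \<Delta>"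
  shows "\<exists>(X :: nat \<Rightarrow> real set) \<mu>. (\<forall>i. finite (X i) \<and> 0 \<in> X i) \<and> \<Delta> = minkowski_complex n X \<mu>"
proof -
  have finite_nonfaces: "finite (Pow {1..n} - \<Delta>)" "\<And>\<tau>. \<tau> \<in> Pow {1..n} - \<Delta> \<Longrightarrow> finite \<tau>"
    by (auto intro: finite_subset)
  obtain X :: "nat \<Rightarrow> real set" and \<mu> where X: "\<forall>i. finite (X i) \<and> 0 \<in> X i"
    and \<mu>: "\<forall>\<sigma>. finite \<sigma> \<longrightarrow> (\<mu> \<in> msum X \<sigma> \<longleftrightarrow> (\<exists>\<tau>\<in>Pow {1..n} - \<Delta>. \<tau> \<subseteq> \<sigma>))"
    using minkowski_sum_realizes_upward_family[OF finite_nonfaces] by blast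
  have faces_down: "\<And>\<sigma> \<tau>. \<sigma> \<in> \<Delta> \<Longrightarrow> \<tau> \<subseteq> \<sigma> \<Longrightarrow> \<tau> \<in> \<Delta>"
    and faces_sub: "\<Delta> \<subseteq> Pow {1..n}"
    using assms unfolding simplicial_complex_def by blast+
  have "\<sigma> \<in> \<Delta> \<longleftrightarrow> \<mu> \<notin> msum X \<sigma>" if "\<sigma> \<subseteq> {1..n}" for \<sigma>
  proof -
    have "\<mu> \<in> msum X \<sigma> \<longleftrightarrow> (\<exists>\<tau>\<in>Pow {1..n} - \<Delta>. \<tau> \<subseteq> \<sigma>)"
      using \<mu> finite_subset[OF that finite_atLeastAtMost] by blast
    also have "\<dots> \<longleftrightarrow> \<sigma> \<notin> \<Delta>"
      using faces_down that by blast
    finally show ?thesis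
      by blast
  qed
  then have "\<Delta> = minkowski_complex n X \<mu>"
    using faces_sub unfolding minkowski_complex_def by auto
  with X show ?thesis
    by blast
qed

definition axis_cone :: "real set \<Rightarrow> (real^2) set" where
  "axis_cone S = (\<lambda>(l, x). vector [l * x, 1 - l]) ` ({0..1} \<times> S)"

lemma vector_in_axis_cone: "x \<in> S \<Longrightarrow> vector [x, 0] \<in> axis_cone S"
  unfolding axis_cone_def by (rule image_eqI[where x = "(1, x)"]) auto

lemma zero_in_axis_cone: "0 \<in> S \<Longrightarrow> 0 \<in> axis_cone S"
proof -
  have "(0 :: real^2) = vector [0, 0]"
    by (simp add: vec_eq_iff forall_2)
  then show "0 \<in> S \<Longrightarrow> 0 \<in> axis_cone S"
    using vector_in_axis_cone by metis
qed

lemma contractible_axis_cone: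
  assumes "S \<noteq> {}"
  shows "contractible (axis_cone S)"
proof (rule starlike_imp_contractible)
  let ?apex = "vector [0, 1] :: real^2"
  obtain x where "x \<in> S"
    using assms by blast
  then have "?apex \<in> axis_cone S"
    unfolding axis_cone_def by (auto intro!: image_eqI[where x = "(0, x)"])
  moreover have "closed_segment ?apex p \<subseteq> axis_cone S" if "p \<in> axis_cone S" for p
  proof
    fix q assume "q \<in> closed_segment ?apex p"
    then obtain u where u: "0 \<le> u" "u \<le> 1" "q = (1 - u) *\<^sub>R ?apex + u *\<^sub>R p"
      unfolding closed_segment_def by auto
    from that obtain l x where lx: "l \<in> {0..1}" "x \<in> S" "p = vector [l * x, 1 - l]"
      unfolding axis_cone_def by auto
    have "q = vector [(u * l) * x, 1 - u * l]"
      using u(3) lx(3) by (simp add: vec_eq_iff forall_2 algebra_simps)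
    moreover have "u * l \<in> {0..1}"
      using u lx(1) by (auto intro: mult_le_one)
    ultimately show "q \<in> axis_cone S"
      unfolding axis_cone_def using lx(2) by (auto intro!: image_eqI[where x = "(u * l, x)"])
  qed
  ultimately show "starlike (axis_cone S)"
    unfolding starlike_def by blast
qed

lemma axis_cone_second_nonneg: "p \<in> axis_cone S \<Longrightarrow> 0 \<le> p $ 2"
  unfolding axis_cone_def by auto

lemma axis_cone_on_axis: "p \<in> axis_cone S \<Longrightarrow> p $ 2 = 0 \<Longrightarrow> p $ 1 \<in> S"
  unfolding axis_cone_def by auto

lemma vector_in_msum_axis_cone_iff:
  assumes "finite \<sigma>"
  shows "vector [\<mu>, 0] \<in> msum (\<lambda>i. axis_cone (X i)) \<sigma> \<longleftrightarrow> \<mu> \<in> msum X \<sigma>"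
proof
  assume "\<mu> \<in> msum X \<sigma>"
  then obtain x where x: "\<forall>i\<in>\<sigma>. x i \<in> X i" "\<mu> = (\<Sum>i\<in>\<sigma>. x i)"
    unfolding msum_def by auto
  have "vector [\<mu>, 0] = (\<Sum>i\<in>\<sigma>. vector [x i, 0] :: real^2)"
    using x(2) by (simp add: vec_eq_iff forall_2)
  with x(1) show "vector [\<mu>, 0] \<in> msum (\<lambda>i. axis_cone (X i)) \<sigma>"
    unfolding msum_def by (auto intro: vector_in_axis_cone)
next
  assume "vector [\<mu>, 0] \<in> msum (\<lambda>i. axis_cone (X i)) \<sigma>"
  then obtain p where p: "\<forall>i\<in>\<sigma>. p i \<in> axis_cone (X i)" "vector [\<mu>, 0] = (\<Sum>i\<in>\<sigma>. p i)"
    unfolding msum_def by auto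
  have second_sum: "(\<Sum>i\<in>\<sigma>. p i $ 2) = 0" and \<mu>_eq: "\<mu> = (\<Sum>i\<in>\<sigma>. p i $ 1)"
    using arg_cong[OF p(2), of "\<lambda>v. v $ 2"] arg_cong[OF p(2), of "\<lambda>v. v $ 1"]
    by simp_all
  have "\<forall>i\<in>\<sigma>. 0 \<le> p i $ 2"
    using p(1) axis_cone_second_nonneg by blast
  then have "\<forall>i\<in>\<sigma>. p i $ 2 = 0"
    using sum_nonneg_eq_0_iff[OF assms, of "\<lambda>i. p i $ 2"] second_sum by simp
  with p(1) have "\<forall>i\<in>\<sigma>. p i $ 1 \<in> X i"
    using axis_cone_on_axis by blast
  with \<mu>_eq show "\<mu> \<in> msum X \<sigma>"
    unfolding msum_def by blast
qed

lemma minkowski_complex_axis_cone: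
  "minkowski_complex n (\<lambda>i. axis_cone (X i)) (vector [\<mu>, 0]) = minkowski_complex n X \<mu>"
  unfolding minkowski_complex_def
  using vector_in_msum_axis_cone_iff finite_subset[OF _ finite_atLeastAtMost] by blast

theorem proposition7:
  fixes n :: nat and \<Delta> :: "nat set set"
  assumes "simplicial_complex n \<Delta>"
  shows "(\<exists>(X :: nat \<Rightarrow> real set) (\<mu> :: real).
            (\<forall>i\<in>{1..n}. discrete (X i) \<and> 0 \<in> X i) \<and> \<Delta> = minkowski_complex n X \<mu>)
       \<and> (\<exists>(X :: nat \<Rightarrow> (real^2) set) (\<mu> :: real^2).
            (\<forall>i\<in>{1..n}. contractible (X i) \<and> 0 \<in> X i) \<and> \<Delta> = minkowski_complex n X \<mu>)"
proof -
  obtain X :: "nat \<Rightarrow> real set" and \<mu> where X: "\<forall>i. finite (X i) \<and> 0 \<in> X i"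
    and \<Delta>: "\<Delta> = minkowski_complex n X \<mu>"
    using simplicial_complex_eq_minkowski_complex_finite[OF assms] by blast
  have "\<forall>i. discrete (X i) \<and> 0 \<in> X i"
    using X discrete_compact_finite_iff by blast
  moreover have "\<forall>i. contractible (axis_cone (X i)) \<and> 0 \<in> axis_cone (X i)"
    using X contractible_axis_cone zero_in_axis_cone by blast
  ultimately show ?thesis
    using \<Delta> minkowski_complex_axis_cone[of n X \<mu>]
    by (intro conjI exI[where x = X] exI[where x = \<mu>] exI[where x = "\<lambda>i. axis_cone (X i)"]
        exI[where x = "vector [\<mu>, 0]"]) auto
qed

end
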